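(* If two NFAs $\mathcal{A}_1$ and $\mathcal{A}_2$ over a finite alphabet $A$ both admit a $(\vec u,\vec B)$-path for the same factorization pattern $(\vec u,\vec B)$, then $L(\mathcal{A}_1)$ and $L(\mathcal{A}_2)$ are not PT-separable.
   Context: Piecewise testable (PT) languages over $A$ are finite Boolean combinations of languages $A^*a_1A^*\cdots A^*a_nA^*$ ($a_i\in A$); $L_1,L_2$ are PT-separable if some PT language $L$ satisfies $L_1\subseteq L$ and $L\cap L_2=\varnothing$. For states $p,q$ and $B\subseteq A$: $p\xrightarrow{\subseteq B}q$ denotes a path (possibly empty) from $p$ to $q$ with all transition labels in $B$; $p\xrightarrow{=B}q$ denotes such a path in which every letter of $B$ occurs. A factorization pattern is $(\vec u,\vec B)$ with $\vec u=(u_0,\dots,u_p)\in (A^* )^{p+1}$ and $\vec B=(B_1,\dots,B_p)$ nonempty subsets of $A$. A $(\vec u,\vec B)$-path is a path from an initial to a final state of the form $s_0\xrightarrow{u_0}p_1\xrightarrow{\subseteq B_1}q_1\xrightarrow{=B_1}q_1\xrightarrow{\subseteq B_1}r_1\xrightarrow{u_1}\cdots\xrightarrow{u_{p-1}}p_p\xrightarrow{\subseteq B_p}q_p\xrightarrow{=B_p}q_p\xrightarrow{\subseteq B_p}r_p\xrightarrow{u_p}f$. *)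

theory Defs
  imports Main
begin

record ('q, 'a) nfa =
  states :: "'q set"
  init   :: "'q set"
  final  :: "'q set"
  trans  :: "('q \<times> 'a \<times> 'q) set"

definition wf_nfa :: "'a set \<Rightarrow> ('q, 'a) nfa \<Rightarrow> bool" where
  "wf_nfa A N \<longleftrightarrow> finite (states N) \<and> init N \<subseteq> states N \<and> final N \<subseteq> states N
     \<and> trans N \<subseteq> states N \<times> A \<times> states N"

inductive steps :: "('q, 'a) nfa \<Rightarrow> 'q \<Rightarrow> 'a list \<Rightarrow> 'q \<Rightarrow> bool" for N where
  steps_nil: "steps N p [] p"
| steps_cons: "(p, a, p') \<in> trans N \<Longrightarrow> steps N p' w q \<Longrightarrow> steps N p (a # w) q"

definition lang :: "('q, 'a) nfa \<Rightarrow> 'a list set" where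
  "lang N = {w. \<exists>s\<in>init N. \<exists>f\<in>final N. steps N s w f}"

definition path_sub :: "('q, 'a) nfa \<Rightarrow> 'a set \<Rightarrow> 'q \<Rightarrow> 'q \<Rightarrow> bool" where
  "path_sub N B p q \<longleftrightarrow> (\<exists>w. set w \<subseteq> B \<and> steps N p w q)"

definition path_eq :: "('q, 'a) nfa \<Rightarrow> 'a set \<Rightarrow> 'q \<Rightarrow> 'q \<Rightarrow> bool" where
  "path_eq N B p q \<longleftrightarrow> (\<exists>w. set w = B \<and> steps N p w q)"

definition fact_pattern :: "'a set \<Rightarrow> 'a list list \<Rightarrow> 'a set list \<Rightarrow> bool" where
  "fact_pattern A us Bs \<longleftrightarrow> length us = length Bs + 1 \<and> (\<forall>u\<in>set us. set u \<subseteq> A)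
     \<and> (\<forall>B\<in>set Bs. B \<noteq> {} \<and> B \<subseteq> A)"

fun pat_path :: "('q, 'a) nfa \<Rightarrow> 'q \<Rightarrow> 'a list list \<Rightarrow> 'a set list \<Rightarrow> 'q \<Rightarrow> bool" where
  "pat_path N s [u] [] f = steps N s u f"
| "pat_path N s (u # us) (B # Bs) f =
     (\<exists>p q r. steps N s u p \<and> path_sub N B p q \<and> path_eq N B q q \<and> path_sub N B q r
        \<and> pat_path N r us Bs f)"
| "pat_path N s _ _ f = False"

definition has_pattern_path :: "('q, 'a) nfa \<Rightarrow> 'a list list \<Rightarrow> 'a set list \<Rightarrow> bool" where
  "has_pattern_path N us Bs \<longleftrightarrow> (\<exists>s\<in>init N. \<exists>f\<in>final N. pat_path N s us Bs f)"

fun piece :: "'a set \<Rightarrow> 'a list \<Rightarrow> 'a list set" where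
  "piece A [] = lists A"
| "piece A (a # as) = {v @ [a] @ w | v w. v \<in> lists A \<and> w \<in> piece A as}"

inductive_set PT :: "'a set \<Rightarrow> 'a list set set" for A where
  PT_piece: "set as \<subseteq> A \<Longrightarrow> piece A as \<in> PT A"
| PT_compl: "L \<in> PT A \<Longrightarrow> lists A - L \<in> PT A"
| PT_union: "L1 \<in> PT A \<Longrightarrow> L2 \<in> PT A \<Longrightarrow> L1 \<union> L2 \<in> PT A"
| PT_inter: "L1 \<in> PT A \<Longrightarrow> L2 \<in> PT A \<Longrightarrow> L1 \<inter> L2 \<in> PT A"

definition PT_separable :: "'a set \<Rightarrow> 'a list set \<Rightarrow> 'a list set \<Rightarrow> bool" where
  "PT_separable A L1 L2 \<longleftrightarrow> (\<exists>L\<in>PT A. L1 \<subseteq> L \<and> L \<inter> L2 = {})"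

end

theory Submission
  imports Defs "HOL-Library.Sublist"
begin

text \<open>
  A PT language is saturated by Simon's congruence \<open>\<sim>\<^sub>k\<close> for some \<open>k\<close>, where \<open>w \<sim>\<^sub>k w'\<close> means
  that \<open>w\<close> and \<open>w'\<close> have the same scattered subwords of length at most \<open>k\<close>. Traversing each
  \<open>=B\<^sub>i\<close>-loop \<open>k\<close> times turns a \<open>(u,B)\<close>-path into an accepted word
  \<open>u\<^sub>0 x\<^sub>1 v\<^sub>1\<^sup>k y\<^sub>1 u\<^sub>1 \<cdots>\<close> with \<open>set v\<^sub>i = B\<^sub>i\<close> and \<open>x\<^sub>i, y\<^sub>i \<in> B\<^sub>i\<^sup>*\<close>. The short subwords of a block
  \<open>x v\<^sup>k y\<close> are exactly the words over \<open>B\<close> of length at most \<open>k\<close>, independently of \<open>x, v, y\<close>;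
  since \<open>\<sim>\<^sub>k\<close> is a congruence, the words obtained in the two automata are \<open>\<sim>\<^sub>k\<close>-equivalent, so
  no PT language can contain one and avoid the other.
\<close>

definition simon_congr :: "nat \<Rightarrow> 'a list \<Rightarrow> 'a list \<Rightarrow> bool" where
  "simon_congr k w w' \<longleftrightarrow> (\<forall>z. length z \<le> k \<longrightarrow> (subseq z w \<longleftrightarrow> subseq z w'))"

lemma simon_congr_refl: "simon_congr k w w"
  by (simp add: simon_congr_def)

lemma simon_congr_mono: "simon_congr k w w' \<Longrightarrow> j \<le> k \<Longrightarrow> simon_congr j w w'"
  unfolding simon_congr_def by auto

lemma simon_congr_append:
  assumes "simon_congr k a a'" and "simon_congr k b b'"
  shows "simon_congr k (a @ b) (a' @ b')"
  unfolding simon_congr_def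
proof (intro allI impI)
  fix z :: "'a list"
  assume "length z \<le> k"
  then have "length z1 \<le> k \<and> length z2 \<le> k" if "z = z1 @ z2" for z1 z2
    using that by simp
  with assms have "(\<exists>z1 z2. z = z1 @ z2 \<and> subseq z1 a \<and> subseq z2 b)
      \<longleftrightarrow> (\<exists>z1 z2. z = z1 @ z2 \<and> subseq z1 a' \<and> subseq z2 b')"
    unfolding simon_congr_def by blast
  then show "subseq z (a @ b) \<longleftrightarrow> subseq z (a' @ b')"
    by (simp only: subseq_append_iff)
qed

lemma set_mono_subseq: "subseq xs ys \<Longrightarrow> set xs \<subseteq> set ys"
  by (induction rule: list_emb.induct) auto

lemma subseq_concat_replicate:
  "set z \<subseteq> set v \<Longrightarrow> length z \<le> n \<Longrightarrow> subseq z (concat (replicate n v))"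
proof (induction z arbitrary: n)
  case Nil
  then show ?case by simp
next
  case (Cons a z)
  then obtain m where n: "n = Suc m" and "length z \<le> m"
    by (cases n) auto
  with Cons have "subseq z (concat (replicate m v))"
    by simp
  moreover have "subseq [a] v"
    using Cons.prems by (simp add: subseq_singleton_left)
  ultimately show ?case
    using list_emb_append_mono[of "(=)" "[a]" v z] n by simp
qed

lemma subseq_pumped_block_iff:
  assumes "set x \<subseteq> B" "set y \<subseteq> B" "set v = B" "length z \<le> n"
  shows "subseq z (x @ concat (replicate n v) @ y) \<longleftrightarrow> set z \<subseteq> B"
proof
  assume "subseq z (x @ concat (replicate n v) @ y)"
  then show "set z \<subseteq> B"
    using set_mono_subseq assms(1-3) by fastforce
next
  assume "set z \<subseteq> B"
  then have "subseq z (concat (replicate n v))"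
    using assms(3,4) by (simp add: subseq_concat_replicate)
  then show "subseq z (x @ concat (replicate n v) @ y)"
    by (metis subseq_drop_many subseq_rev_drop_many)
qed

lemma simon_congr_pumped_block:
  assumes "set x \<subseteq> B" "set y \<subseteq> B" "set v = B"
    and "set x' \<subseteq> B" "set y' \<subseteq> B" "set v' = B"
  shows "simon_congr k (x @ concat (replicate k v) @ y) (x' @ concat (replicate k v') @ y')"
  unfolding simon_congr_def using assms by (simp add: subseq_pumped_block_iff)

inductive pumped_pattern_word :: "nat \<Rightarrow> 'a list list \<Rightarrow> 'a set list \<Rightarrow> 'a list \<Rightarrow> bool"
  for k where
  last_factor: "pumped_pattern_word k [u] [] u"
| pumped_block: "set x \<subseteq> B \<Longrightarrow> set y \<subseteq> B \<Longrightarrow> set v = B \<Longrightarrow> pumped_pattern_word k us Bs w \<Longrightarrow>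
    pumped_pattern_word k (u # us) (B # Bs) (u @ (x @ concat (replicate k v) @ y) @ w)"

lemma pumped_pattern_words_simon_congr:
  "pumped_pattern_word k us Bs w \<Longrightarrow> pumped_pattern_word k us Bs w' \<Longrightarrow> simon_congr k w w'"
proof (induction arbitrary: w' rule: pumped_pattern_word.induct)
  case (last_factor u)
  then show ?case
    by (cases rule: pumped_pattern_word.cases) (simp_all add: simon_congr_refl)
next
  case (pumped_block x B y v us Bs w u)
  from pumped_block.prems show ?case
  proof (cases rule: pumped_pattern_word.cases)
    case (pumped_block x' y' v' w'')
    have "simon_congr k w w''"
      using pumped_block.IH \<open>pumped_pattern_word k us Bs w''\<close> .
    moreover have "simon_congr k (x @ concat (replicate k v) @ y) (x' @ concat (replicate k v') @ y')"
      using pumped_block.hyps pumped_block by (intro simon_congr_pumped_block)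
    ultimately show ?thesis
      using \<open>w' = u @ (x' @ concat (replicate k v') @ y') @ w''\<close>
      by (metis simon_congr_append simon_congr_refl)
  qed
qed

lemma steps_append: "steps N p a q \<Longrightarrow> steps N q b r \<Longrightarrow> steps N p (a @ b) r"
  by (induction rule: steps.induct) (auto intro: steps.intros)

lemma steps_concat_replicate: "steps N q v q \<Longrightarrow> steps N q (concat (replicate n v)) q"
  by (induction n) (auto intro: steps.intros steps_append)

lemma steps_in_lists: "steps N p w q \<Longrightarrow> trans N \<subseteq> S \<times> A \<times> S \<Longrightarrow> w \<in> lists A"
  by (induction rule: steps.induct) auto

lemma pat_path_pumped_pattern_word:
  "pat_path N s us Bs f \<Longrightarrow> \<exists>w. pumped_pattern_word k us Bs w \<and> steps N s w f"
proof (induction N s us Bs f rule: pat_path.induct)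
  case (1 N s u f)
  then show ?case by (auto intro: last_factor)
next
  case (2 N s u us B Bs f)
  then obtain p q r where u: "steps N s u p" and "path_sub N B p q" "path_eq N B q q"
    "path_sub N B q r" and rest: "pat_path N r us Bs f"
    by auto
  then obtain x v y where x: "set x \<subseteq> B" "steps N p x q" and v: "set v = B" "steps N q v q"
    and y: "set y \<subseteq> B" "steps N q y r"
    unfolding path_sub_def path_eq_def by blast
  obtain w where w: "pumped_pattern_word k us Bs w" "steps N r w f"
    using "2.IH" u rest by blast
  have "steps N s (u @ (x @ concat (replicate k v) @ y) @ w) f"
    using u x v y w by (blast intro: steps_append steps_concat_replicate)
  then show ?case
    using pumped_block[OF x(1) y(1) v(1) w(1)] by blast
qed auto

lemma piece_eq: "set as \<subseteq> A \<Longrightarrow> piece A as = {w \<in> lists A. subseq as w}"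
proof (induction as)
  case Nil
  then show ?case by auto
next
  case (Cons a as)
  show ?case
  proof (intro set_eqI iffI)
    fix w
    assume "w \<in> piece A (a # as)"
    with Cons show "w \<in> {w \<in> lists A. subseq (a # as) w}"
      by (auto intro: subseq_drop_many)
  next
    fix w
    assume w: "w \<in> {w \<in> lists A. subseq (a # as) w}"
    then obtain xs ys where "w = xs @ a # ys" "subseq as ys"
      using list_emb_ConsD[of "(=)" a as w] by auto
    with w Cons show "w \<in> piece A (a # as)"
      by auto
  qed
qed

definition simon_saturated :: "'a set \<Rightarrow> nat \<Rightarrow> 'a list set \<Rightarrow> bool" where
  "simon_saturated A k L \<longleftrightarrow>
     (\<forall>w\<in>lists A. \<forall>w'\<in>lists A. simon_congr k w w' \<longrightarrow> (w \<in> L \<longleftrightarrow> w' \<in> L))"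

lemma simon_saturated_mono: "simon_saturated A j L \<Longrightarrow> j \<le> k \<Longrightarrow> simon_saturated A k L"
  unfolding simon_saturated_def using simon_congr_mono by blast

lemma simon_saturated_max:
  assumes "simon_saturated A j L" and "simon_saturated A k L'"
  obtains "simon_saturated A (max j k) L" and "simon_saturated A (max j k) L'"
  using assms simon_saturated_mono by (metis max.cobounded1 max.cobounded2)

lemma PT_simon_saturated: "L \<in> PT A \<Longrightarrow> \<exists>k. simon_saturated A k L"
proof (induction rule: PT.induct)
  case (PT_piece as)
  then have "simon_saturated A (length as) (piece A as)"
    by (simp add: simon_saturated_def simon_congr_def piece_eq)
  then show ?case ..
next
  case (PT_compl L)
  then show ?case
    by (auto simp: simon_saturated_def)
next
  case (PT_union L1 L2)
  then obtain k where "simon_saturated A k L1" "simon_saturated A k L2"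
    by (metis simon_saturated_max)
  then show ?case
    unfolding simon_saturated_def by blast
next
  case (PT_inter L1 L2)
  then obtain k where "simon_saturated A k L1" "simon_saturated A k L2"
    by (metis simon_saturated_max)
  then show ?case
    unfolding simon_saturated_def by blast
qed

lemma pattern_path_pumped_word_in_lang:
  assumes "wf_nfa A N" and "has_pattern_path N us Bs"
  obtains w where "pumped_pattern_word k us Bs w" and "w \<in> lang N" and "w \<in> lists A"
proof -
  obtain s f w where "s \<in> init N" "f \<in> final N"
    and w: "pumped_pattern_word k us Bs w" "steps N s w f"
    using assms(2) pat_path_pumped_pattern_word unfolding has_pattern_path_def by meson
  then have "w \<in> lang N"
    unfolding lang_def by blast
  moreover have "w \<in> lists A"
    using w(2) assms(1) steps_in_lists unfolding wf_nfa_def by metis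
  ultimately show thesis
    using that w(1) by blast
qed

theorem lemma2:
  fixes A :: "'a set" and N1 :: "('q1, 'a) nfa" and N2 :: "('q2, 'a) nfa"
    and us :: "'a list list" and Bs :: "'a set list"
  assumes "finite A"
    and "wf_nfa A N1" and "wf_nfa A N2"
    and "fact_pattern A us Bs"
    and "has_pattern_path N1 us Bs" and "has_pattern_path N2 us Bs"
  shows "\<not> PT_separable A (lang N1) (lang N2)"
proof
  assume "PT_separable A (lang N1) (lang N2)"
  then obtain L where "L \<in> PT A" and L1: "lang N1 \<subseteq> L" and L2: "L \<inter> lang N2 = {}"
    unfolding PT_separable_def by blast
  then obtain k where k: "simon_saturated A k L"
    using PT_simon_saturated by blast
  obtain w1 where w1: "pumped_pattern_word k us Bs w1" "w1 \<in> lang N1" "w1 \<in> lists A"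
    using pattern_path_pumped_word_in_lang[OF assms(2,5)] .
  obtain w2 where w2: "pumped_pattern_word k us Bs w2" "w2 \<in> lang N2" "w2 \<in> lists A"
    using pattern_path_pumped_word_in_lang[OF assms(3,6)] .
  have "simon_congr k w1 w2"
    using w1(1) w2(1) by (rule pumped_pattern_words_simon_congr)
  with k w1 w2 L1 have "w2 \<in> L"
    unfolding simon_saturated_def by blast
  with w2(2) L2 show False
    by blast
qed

end
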